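(* Let $\mathbb K$ be a field with $2\in\mathbb K^\times$, $A$ a unital commutative associative $\mathbb K$-algebra, and $\mathfrak k$ a $\mathbb K$-Lie algebra with $H^1(\mathfrak k,\mathfrak k^* )=\{0\}$. Then $\mathfrak g=A\otimes\mathfrak k$ has no coupled cocycles.
   Context: $\mathfrak k^*$ is the coadjoint module, $(x.\lambda)(y)=-\lambda([x,y])$, and $H^1(\mathfrak k,\mathfrak k^* )$ is Chevalley–Eilenberg cohomology. $\mathfrak g$ has bracket $[a\otimes x,a'\otimes x']=aa'\otimes[x,x']$, $ax=a\otimes x$, unit $\mathbf 1$. $v\wedge w=\tfrac12(v\otimes w-w\otimes v)$, $v\vee w=\tfrac12(v\otimes w+w\otimes v)$; $I_A$ is the kernel of multiplication $S^2(A)\to A$. $p_1(ax\wedge by)=a\wedge b\otimes x\vee y$, $p_2(ax\wedge by)=ab\otimes x\wedge y$, $p_3(ax\wedge by)=(a\vee b-ab\vee\mathbf 1)\otimes x\wedge y$ give an isomorphism $\Lambda^2(\mathfrak g)\cong(\Lambda^2(A)\otimes S^2(\mathfrak k))\oplus(A\otimes\Lambda^2(\mathfrak k))\oplus(I_A\otimes\Lambda^2(\mathfrak k))$, so each linear $f:\Lambda^2(\mathfrak g)\to\mathfrak z$ is uniquely $f_1\circ p_1+f_2\circ p_2+f_3\circ p_3$. A 2-cocycle is such an $f$ vanishing on the span of $[u,v]\wedge w+[v,w]\wedge u+[w,u]\wedge v$. A coupled cocycle is a $\mathfrak z$-valued 2-cocycle, for some vector space $\mathfrak z$, with $f_3=0$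 such that $f_1\circ p_1$ is not a 2-cocycle. *)

theory Defs
  imports Main "HOL.Vector_Spaces"
begin

text \<open>All vector spaces are over the field 'k; they are modelled as types with a
  scalar multiplication satisfying the library locale vector_space.\<close>

definition bilinear_map ::
  "('k::field \<Rightarrow> 'u \<Rightarrow> 'u::ab_group_add) \<Rightarrow> ('k \<Rightarrow> 'v \<Rightarrow> 'v::ab_group_add) \<Rightarrow>
   ('k \<Rightarrow> 'w \<Rightarrow> 'w::ab_group_add) \<Rightarrow> ('u \<Rightarrow> 'v \<Rightarrow> 'w) \<Rightarrow> bool" where
  "bilinear_map s1 s2 s3 b \<longleftrightarrow>
     (\<forall>u. Vector_Spaces.linear s2 s3 (b u)) \<and> (\<forall>v. Vector_Spaces.linear s1 s3 (\<lambda>u. b u v))"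

definition comm_unital_algebra :: "('k::field \<Rightarrow> 'a \<Rightarrow> 'a::comm_ring_1) \<Rightarrow> bool" where
  "comm_unital_algebra sA \<longleftrightarrow>
     vector_space sA \<and> (\<forall>c a b. sA c (a * b) = sA c a * b)"

definition lie_algebra :: "('k::field \<Rightarrow> 'l \<Rightarrow> 'l::ab_group_add) \<Rightarrow> ('l \<Rightarrow> 'l \<Rightarrow> 'l) \<Rightarrow> bool" where
  "lie_algebra sL br \<longleftrightarrow>
     vector_space sL \<and> bilinear_map sL sL sL br \<and> (\<forall>x. br x x = 0) \<and>
     (\<forall>x y z. br x (br y z) + br y (br z x) + br z (br x y) = 0)"

definition coad :: "('l \<Rightarrow> 'l \<Rightarrow> 'l) \<Rightarrow> 'l \<Rightarrow> ('l \<Rightarrow> 'k::field) \<Rightarrow> ('l \<Rightarrow> 'k)" where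
  "coad br x lam = (\<lambda>y. - lam (br x y))"

definition dual_space :: "('k::field \<Rightarrow> 'l \<Rightarrow> 'l::ab_group_add) \<Rightarrow> ('l \<Rightarrow> 'k) set" where
  "dual_space sL = {lam. Vector_Spaces.linear sL ((*)) lam}"

text \<open>Chevalley--Eilenberg 1-cochains of k with values in k*: linear maps k \<rightarrow> k*.\<close>
definition CE_1cochain :: "('k::field \<Rightarrow> 'l \<Rightarrow> 'l::ab_group_add) \<Rightarrow> ('l \<Rightarrow> 'l \<Rightarrow> 'k) \<Rightarrow> bool" where
  "CE_1cochain sL c \<longleftrightarrow>
     (\<forall>x. c x \<in> dual_space sL) \<and> (\<forall>y. Vector_Spaces.linear sL ((*)) (\<lambda>x. c x y))"

definition CE_1cocycle :: "('k::field \<Rightarrow> 'l \<Rightarrow> 'l::ab_group_add) \<Rightarrow> ('l \<Rightarrow> 'l \<Rightarrow> 'l) \<Rightarrow> ('l \<Rightarrow> 'l \<Rightarrow> 'k) \<Rightarrow> bool" where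
  "CE_1cocycle sL br c \<longleftrightarrow> CE_1cochain sL c \<and>
     (\<forall>x y z. coad br x (c y) z - coad br y (c x) z - c (br x y) z = 0)"

definition CE_1coboundary :: "('k::field \<Rightarrow> 'l \<Rightarrow> 'l::ab_group_add) \<Rightarrow> ('l \<Rightarrow> 'l \<Rightarrow> 'l) \<Rightarrow> ('l \<Rightarrow> 'l \<Rightarrow> 'k) \<Rightarrow> bool" where
  "CE_1coboundary sL br c \<longleftrightarrow> (\<exists>lam \<in> dual_space sL. \<forall>x. c x = coad br x lam)"

definition H1_coadjoint_zero :: "('k::field \<Rightarrow> 'l \<Rightarrow> 'l::ab_group_add) \<Rightarrow> ('l \<Rightarrow> 'l \<Rightarrow> 'l) \<Rightarrow> bool" where
  "H1_coadjoint_zero sL br \<longleftrightarrow> (\<forall>c. CE_1cocycle sL br c \<longrightarrow> CE_1coboundary sL br c)"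

text \<open>g together with t : A \<times> k \<rightarrow> g is a tensor product A \<otimes> k (t a x = a \<otimes> x):
  t is bilinear and, for some bases BA of A and BL of k, the vectors a \<otimes> x
  (a \<in> BA, x \<in> BL) are pairwise distinct and form a basis of g.\<close>
definition is_tensor_product ::
  "('k::field \<Rightarrow> 'a \<Rightarrow> 'a::ab_group_add) \<Rightarrow> ('k \<Rightarrow> 'l \<Rightarrow> 'l::ab_group_add) \<Rightarrow>
   ('k \<Rightarrow> 'g \<Rightarrow> 'g::ab_group_add) \<Rightarrow> ('a \<Rightarrow> 'l \<Rightarrow> 'g) \<Rightarrow> bool" where
  "is_tensor_product sA sL sG t \<longleftrightarrow>
     vector_space sA \<and> vector_space sL \<and> vector_space sG \<and> bilinear_map sA sL sG t \<and>
     (\<exists>BA BL.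
        \<not> module.dependent sA BA \<and> module.span sA BA = UNIV \<and>
        \<not> module.dependent sL BL \<and> module.span sL BL = UNIV \<and>
        inj_on (case_prod t) (BA \<times> BL) \<and>
        \<not> module.dependent sG (case_prod t ` (BA \<times> BL)) \<and>
        module.span sG (case_prod t ` (BA \<times> BL)) = UNIV)"

definition current_bracket ::
  "('k::field \<Rightarrow> 'a \<Rightarrow> 'a::comm_ring_1) \<Rightarrow> ('k \<Rightarrow> 'l \<Rightarrow> 'l::ab_group_add) \<Rightarrow>
   ('k \<Rightarrow> 'g \<Rightarrow> 'g::ab_group_add) \<Rightarrow> ('l \<Rightarrow> 'l \<Rightarrow> 'l) \<Rightarrow> ('a \<Rightarrow> 'l \<Rightarrow> 'g) \<Rightarrow> ('g \<Rightarrow> 'g \<Rightarrow> 'g) \<Rightarrow> bool" where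
  "current_bracket sA sL sG br t brG \<longleftrightarrow>
     bilinear_map sG sG sG brG \<and> (\<forall>a b x y. brG (t a x) (t b y) = t (a * b) (br x y))"

text \<open>A linear map f : \<Lambda>^2(g) \<rightarrow> z is identified with the alternating bilinear
  map w(u,v) = f(u \<and> v).\<close>
definition alt_bilinear ::
  "('k::field \<Rightarrow> 'g \<Rightarrow> 'g::ab_group_add) \<Rightarrow> ('k \<Rightarrow> 'z \<Rightarrow> 'z::ab_group_add) \<Rightarrow> ('g \<Rightarrow> 'g \<Rightarrow> 'z) \<Rightarrow> bool" where
  "alt_bilinear sG sZ w \<longleftrightarrow> bilinear_map sG sG sZ w \<and> (\<forall>u. w u u = 0)"

definition two_cocycle :: "('g \<Rightarrow> 'g \<Rightarrow> 'g) \<Rightarrow> ('g \<Rightarrow> 'g \<Rightarrow> 'z::ab_group_add) \<Rightarrow> bool" where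
  "two_cocycle brG w \<longleftrightarrow>
     (\<forall>u v x. w (brG u v) x + w (brG v x) u + w (brG x u) v = 0)"

text \<open>Components of f in the decomposition (evaluated on generators):
  comp1 a b x y = f1(a\<and>b \<otimes> x\<or>y),  comp2 c x y = f2(c \<otimes> x\<and>y),
  comp3 a b x y = f3((a\<or>b - ab\<or>1) \<otimes> x\<and>y).  These are obtained by applying f to
  the preimages under p = (p1,p2,p3) of the respective generators.\<close>
definition comp1 :: "('k::field \<Rightarrow> 'z \<Rightarrow> 'z::ab_group_add) \<Rightarrow> ('a \<Rightarrow> 'l \<Rightarrow> 'g) \<Rightarrow> ('g \<Rightarrow> 'g \<Rightarrow> 'z) \<Rightarrow> 'a \<Rightarrow> 'a \<Rightarrow> 'l \<Rightarrow> 'l \<Rightarrow> 'z" where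
  "comp1 sZ t w a b x y = sZ (inverse 2) (w (t a x) (t b y) + w (t a y) (t b x))"

definition comp2 :: "('k::field \<Rightarrow> 'z \<Rightarrow> 'z::ab_group_add) \<Rightarrow> ('a::comm_ring_1 \<Rightarrow> 'l \<Rightarrow> 'g) \<Rightarrow> ('g \<Rightarrow> 'g \<Rightarrow> 'z) \<Rightarrow> 'a \<Rightarrow> 'l \<Rightarrow> 'l \<Rightarrow> 'z" where
  "comp2 sZ t w c x y = sZ (inverse 2) (w (t c x) (t 1 y) - w (t c y) (t 1 x))"

definition comp3 :: "('k::field \<Rightarrow> 'z \<Rightarrow> 'z::ab_group_add) \<Rightarrow> ('a::comm_ring_1 \<Rightarrow> 'l \<Rightarrow> 'g) \<Rightarrow> ('g \<Rightarrow> 'g \<Rightarrow> 'z) \<Rightarrow> 'a \<Rightarrow> 'a \<Rightarrow> 'l \<Rightarrow> 'l \<Rightarrow> 'z" where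
  "comp3 sZ t w a b x y =
     sZ (inverse 2) (w (t a x) (t b y) - w (t a y) (t b x)) - comp2 sZ t w (a * b) x y"

text \<open>Coupled cocycle: a z-valued 2-cocycle f with f3 = 0 such that f1 \<circ> p1 is not a
  2-cocycle.  Here f1 \<circ> p1 is the (alternating) bilinear map w1 on g determined by
  w1(a\<otimes>x, b\<otimes>y) = f1(a\<and>b \<otimes> x\<or>y); f3 = 0 means f3 vanishes on the spanning
  elements (a\<or>b - ab\<or>1) \<otimes> x\<and>y of I_A \<otimes> \<Lambda>^2(k).\<close>
definition coupled_cocycle ::
  "('k::field \<Rightarrow> 'g \<Rightarrow> 'g::ab_group_add) \<Rightarrow> ('k \<Rightarrow> 'z \<Rightarrow> 'z::ab_group_add) \<Rightarrow>
   ('a::comm_ring_1 \<Rightarrow> 'l \<Rightarrow> 'g) \<Rightarrow> ('g \<Rightarrow> 'g \<Rightarrow> 'g) \<Rightarrow> ('g \<Rightarrow> 'g \<Rightarrow> 'z) \<Rightarrow> bool" where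
  "coupled_cocycle sG sZ t brG w \<longleftrightarrow>
     alt_bilinear sG sZ w \<and> two_cocycle brG w \<and>
     (\<forall>a b x y. comp3 sZ t w a b x y = 0) \<and>
     (\<exists>w1. bilinear_map sG sG sZ w1 \<and>
        (\<forall>a b x y. w1 (t a x) (t b y) = comp1 sZ t w a b x y) \<and>
        \<not> two_cocycle brG w1)"

end

theory Submission
  imports Defs
begin

text \<open>On pure tensors a 2-cocycle w with f3 = 0 reads
  w(a\<otimes>x, b\<otimes>y) = f1(a,b;x,y) + f2(ab;x,y), with f1 skew in (a,b) and symmetric in (x,y),
  and f2 skew in (x,y).  Specialising the cocycle identity to a = b = 1 shows that
  \<sigma>(x)(y) = f1(c,1;x,y) - f2(c;x,y) is a 1-cocycle of k with values in Hom(k,Z) for the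
  coadjoint action.  As H^1(k,k*) = 0, \<sigma> is a coboundary, hence skew in (x,y); so its
  symmetric part f1(c,1;-,-) vanishes (2 is invertible).  The same identity then gives
  \<Sum>_cyc f2(c;[x,y],z) = 0, so the f2-part drops out of the cocycle identity of w on pure
  tensors, which becomes the cocycle identity of f1 \<circ> p1.  By trilinearity it extends from
  pure tensors to all of g.\<close>

lemma vector_space_mult: "vector_space ((*) :: 'k::field \<Rightarrow> 'k \<Rightarrow> 'k)"
  by unfold_locales (simp_all add: algebra_simps)

lemma exists_linear_functional_nonzero:
  fixes s :: "'k::field \<Rightarrow> 'v::ab_group_add \<Rightarrow> 'v"
  assumes "vector_space s" "v \<noteq> 0"
  obtains l :: "'v \<Rightarrow> 'k" where "Vector_Spaces.linear s (*) l" "l v \<noteq> 0"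
proof -
  interpret vector_space_pair s "(*) :: 'k \<Rightarrow> 'k \<Rightarrow> 'k"
    using assms(1) vector_space_mult by (simp add: vector_space_pair_def)
  have independent: "\<not> vs1.dependent {v}"
    using assms(2) by simp
  show ?thesis
    by (rule that[OF linear_construct[OF independent, of "\<lambda>_. 1"]])
      (simp add: construct_basis[OF independent])
qed

lemma (in vector_space) scale_half_add_self:
  assumes "(2::'a) \<noteq> 0"
  shows "scale (inverse 2) v + scale (inverse 2) v = v"
proof -
  have "inverse 2 + inverse 2 = (1::'a)"
    using assms by (simp add: field_simps)
  then show ?thesis
    by (metis scale_left_distrib scale_one)
qed

lemma (in vector_space) add_self_eq_0_iff:
  fixes v :: 'b
  assumes "(2::'a) \<noteq> 0"
  shows "v + v = 0 \<longleftrightarrow> v = 0"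
proof
  assume "v + v = 0"
  then have "scale (inverse 2) v + scale (inverse 2) v = 0"
    by (metis scale_right_distrib scale_zero_right)
  then show "v = 0"
    using scale_half_add_self[OF assms] by simp
qed simp

lemma bilinear_map_module_hom:
  assumes "bilinear_map s1 s2 s3 b"
  shows bilinear_map_module_hom_right: "module_hom s2 s3 (b u)"
    and bilinear_map_module_hom_left: "module_hom s1 s3 (\<lambda>u. b u v)"
  using assms by (simp_all add: bilinear_map_def module_hom_iff_linear)

lemma bilinear_map_alternating_antisym:
  assumes "bilinear_map s s s' b" "\<And>u. b u u = 0"
  shows "b u v = - b v u"
proof -
  note add_left = module_hom.add[OF bilinear_map_module_hom_left[OF assms(1)]]
  note add_right = module_hom.add[OF bilinear_map_module_hom_right[OF assms(1)]]
  have "b (u + v) (u + v) = b u u + b u v + (b v u + b v v)"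
    by (simp add: add_left add_right add_ac)
  then have "b u v + b v u = 0"
    using assms(2) by simp
  then show ?thesis
    by (simp add: eq_neg_iff_add_eq_0)
qed

lemma bilinear_map_diff:
  assumes "bilinear_map s1 s2 s3 b" "bilinear_map s1 s2 s3 b'"
  shows "bilinear_map s1 s2 s3 (\<lambda>u v. b u v - b' u v)"
  using assms unfolding bilinear_map_def module_hom_iff_linear[symmetric] module_hom_iff
  by (auto simp: module.scale_right_diff_distrib)

lemma trilinear_eq_0_on_span:
  assumes span: "module.span s S = UNIV"
    and "\<And>y z. module_hom s s' (\<lambda>x. f x y z)"
    and "\<And>x z. module_hom s s' (\<lambda>y. f x y z)"
    and "\<And>x y. module_hom s s' (\<lambda>z. f x y z)"
    and on_S: "\<And>x y z. x \<in> S \<Longrightarrow> y \<in> S \<Longrightarrow> z \<in> S \<Longrightarrow> f x y z = 0"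
  shows "f x y z = 0"
proof -
  have in_span: "u \<in> module.span s S" for u
    using span by simp
  have on_S_S: "f x y z = 0" if "y \<in> S" "z \<in> S" for x y z
    by (rule module_hom.eq_0_on_span[OF assms(2) _ in_span]) (use on_S that in auto)
  have on_S: "f x y z = 0" if "z \<in> S" for x y z
    by (rule module_hom.eq_0_on_span[OF assms(3) _ in_span]) (use on_S_S that in auto)
  show ?thesis
    by (rule module_hom.eq_0_on_span[OF assms(4) _ in_span]) (use on_S in auto)
qed

lemma lie_algebra_antisym:
  assumes "lie_algebra sL br"
  shows "br x y = - br y x"
  using assms bilinear_map_alternating_antisym unfolding lie_algebra_def by blast

lemma H1_coadjoint_zero_cocycle_antisym:
  assumes "lie_algebra sL br" "H1_coadjoint_zero sL br" "CE_1cocycle sL br c"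
  shows "c x y = - c y x"
proof -
  obtain lam where lam: "lam \<in> dual_space sL" "\<And>u. c u = coad br u lam"
    using assms(2,3) unfolding H1_coadjoint_zero_def CE_1coboundary_def by blast
  have "module_hom sL (*) lam"
    using lam(1) unfolding dual_space_def module_hom_iff_linear by simp
  then have "lam (br y x) = - lam (br x y)"
    using lie_algebra_antisym[OF assms(1), of y x] module_hom.neg by metis
  then show ?thesis
    using lam(2) by (simp add: coad_def)
qed

text \<open>The same for 1-cocycles with values in Hom(k,Z), written as bilinear maps k \<times> k \<rightarrow> Z:
  composing with linear functionals, which separate the points of Z, reduces to the scalar case.\<close>

lemma H1_coadjoint_zero_vector_cocycle_antisym:
  fixes sL :: "'k::field \<Rightarrow> 'l::ab_group_add \<Rightarrow> 'l"
    and sZ :: "'k \<Rightarrow> 'z::ab_group_add \<Rightarrow> 'z"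
    and sigma :: "'l \<Rightarrow> 'l \<Rightarrow> 'z"
  assumes lie: "lie_algebra sL br" and H1: "H1_coadjoint_zero sL br" and "vector_space sZ"
    and bilinear: "bilinear_map sL sL sZ sigma"
    and cocycle: "\<And>x y z. sigma x (br y z) - sigma y (br x z) - sigma (br x y) z = 0"
  shows "sigma x y = - sigma y x"
proof (rule ccontr)
  assume "sigma x y \<noteq> - sigma y x"
  then have "sigma x y + sigma y x \<noteq> 0"
    by (simp add: eq_neg_iff_add_eq_0)
  with \<open>vector_space sZ\<close> obtain l :: "'z \<Rightarrow> 'k"
    where l_linear: "Vector_Spaces.linear sZ (*) l" and l_nonzero: "l (sigma x y + sigma y x) \<noteq> 0"
    by (rule exists_linear_functional_nonzero)
  have l: "module_hom sZ (*) l"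
    using l_linear unfolding module_hom_iff_linear .
  define c where "c = (\<lambda>u v. l (sigma u v))"
  have "CE_1cocycle sL br c"
    unfolding CE_1cocycle_def CE_1cochain_def dual_space_def mem_Collect_eq
  proof (intro conjI allI)
    show "Vector_Spaces.linear sL (*) (c u)" for u
      using module_hom_compose[OF bilinear_map_module_hom_right[OF bilinear] l]
      unfolding c_def o_def module_hom_iff_linear .
    show "Vector_Spaces.linear sL (*) (\<lambda>u. c u v)" for v
      using module_hom_compose[OF bilinear_map_module_hom_left[OF bilinear] l]
      unfolding c_def o_def module_hom_iff_linear .
    fix u v w
    have "coad br u (c v) w - coad br v (c u) w - c (br u v) w
        = l (sigma u (br v w)) - l (sigma v (br u w)) - l (sigma (br u v) w)"
      by (simp add: coad_def c_def)
    also have "\<dots> = l (sigma u (br v w) - sigma v (br u w) - sigma (br u v) w)"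
      by (simp only: module_hom.diff[OF l])
    also have "\<dots> = 0"
      using cocycle module_hom.zero[OF l] by simp
    finally show "coad br u (c v) w - coad br v (c u) w - c (br u v) w = 0" .
  qed
  then have "c x y = - c y x"
    by (rule H1_coadjoint_zero_cocycle_antisym[OF lie H1])
  with l_nonzero show False
    by (simp add: c_def module_hom.add[OF l] eq_neg_iff_add_eq_0)
qed

lemma is_tensor_product_span:
  assumes "is_tensor_product sA sL sG t"
  shows "module.span sG (range (case_prod t)) = UNIV"
proof -
  obtain BA BL where "vector_space sG" "module.span sG (case_prod t ` (BA \<times> BL)) = UNIV"
    using assms unfolding is_tensor_product_def by blast
  then show ?thesis
    using module.span_mono[of sG "case_prod t ` (BA \<times> BL)" "range (case_prod t)"]
    unfolding module_iff_vector_space by blast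
qed

lemma two_cocycle_on_span:
  assumes span: "module.span sG S = UNIV"
    and "bilinear_map sG sG sG brG" "bilinear_map sG sG sZ w"
    and on_S: "\<And>u v x. u \<in> S \<Longrightarrow> v \<in> S \<Longrightarrow> x \<in> S \<Longrightarrow>
      w (brG u v) x + w (brG v x) u + w (brG x u) v = 0"
  shows "two_cocycle brG w"
proof -
  have "module_hom sG sG (brG u)" "module_hom sG sG (\<lambda>u. brG u v)"
    and "module_hom sG sZ (w u)" "module_hom sG sZ (\<lambda>u. w u v)" for u v
    using assms(2,3) by (simp_all add: bilinear_map_module_hom)
  then have "module_hom sG sZ (\<lambda>u. w (brG u v) x + w (brG v x) u + w (brG x u) v)"
    and "module_hom sG sZ (\<lambda>v. w (brG u v) x + w (brG v x) u + w (brG x u) v)"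
    and "module_hom sG sZ (\<lambda>x. w (brG u v) x + w (brG v x) u + w (brG x u) v)" for u v x
    unfolding module_hom_iff
    by (auto simp: module.scale_right_distrib module_hom.add module_hom.scale algebra_simps)
  then have "w (brG u v) x + w (brG v x) u + w (brG x u) v = 0" for u v x
    by (rule trilinear_eq_0_on_span[OF span,
          where f = "\<lambda>u v x. w (brG u v) x + w (brG v x) u + w (brG x u) v"])
      (use on_S in auto)
  then show ?thesis
    unfolding two_cocycle_def by blast
qed

locale current_algebra_cocycle =
  fixes sA :: "'k::field \<Rightarrow> 'a::comm_ring_1 \<Rightarrow> 'a"
    and sL :: "'k \<Rightarrow> 'l::ab_group_add \<Rightarrow> 'l"
    and br :: "'l \<Rightarrow> 'l \<Rightarrow> 'l"
    and sG :: "'k \<Rightarrow> 'g::ab_group_add \<Rightarrow> 'g"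
    and t :: "'a \<Rightarrow> 'l \<Rightarrow> 'g"
    and brG :: "'g \<Rightarrow> 'g \<Rightarrow> 'g"
    and sZ :: "'k \<Rightarrow> 'z::ab_group_add \<Rightarrow> 'z"
    and w :: "'g \<Rightarrow> 'g \<Rightarrow> 'z"
  assumes two_nonzero: "(2::'k) \<noteq> 0"
    and lie: "lie_algebra sL br"
    and H1: "H1_coadjoint_zero sL br"
    and tensor: "is_tensor_product sA sL sG t"
    and bracket: "current_bracket sA sL sG br t brG"
    and vector_space_Z: "vector_space sZ"
    and alternating: "alt_bilinear sG sZ w"
    and cocycle: "two_cocycle brG w"
    and comp3_zero: "\<And>a b x y. comp3 sZ t w a b x y = 0"
begin

abbreviation "f1 \<equiv> comp1 sZ t w"
abbreviation "f2 \<equiv> comp2 sZ t w"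

interpretation Z: vector_space sZ
  by (rule vector_space_Z)

lemma vector_space_L: "vector_space sL"
  using lie by (simp add: lie_algebra_def)

lemma bracket_tensor: "brG (t a x) (t b y) = t (a * b) (br x y)"
  using bracket by (simp add: current_bracket_def)

lemma t_hom: "module_hom sL sG (t a)"
  using tensor bilinear_map_module_hom_right unfolding is_tensor_product_def by blast

lemma w_bilinear: "bilinear_map sG sG sZ w"
  using alternating by (simp add: alt_bilinear_def)

lemma w_antisym: "w u v = - w v u"
  using alternating bilinear_map_alternating_antisym unfolding alt_bilinear_def by blast

lemmas linear_simps =
  module_hom.add[OF t_hom] module_hom.scale[OF t_hom]
  module_hom.add[OF bilinear_map_module_hom_right[OF w_bilinear]]
  module_hom.add[OF bilinear_map_module_hom_left[OF w_bilinear]]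
  module_hom.scale[OF bilinear_map_module_hom_right[OF w_bilinear]]
  module_hom.scale[OF bilinear_map_module_hom_left[OF w_bilinear]]

lemma w_tensor_decomp: "w (t a x) (t b y) = f1 a b x y + f2 (a * b) x y"
proof -
  have "f2 (a * b) x y = sZ (inverse 2) (w (t a x) (t b y) - w (t a y) (t b x))"
    using comp3_zero[of a b x y] by (simp add: comp3_def)
  then have "f1 a b x y + f2 (a * b) x y
      = sZ (inverse 2) (w (t a x) (t b y)) + sZ (inverse 2) (w (t a x) (t b y))"
    by (simp add: comp1_def Z.scale_right_distrib Z.scale_right_diff_distrib)
  then show ?thesis
    using Z.scale_half_add_self[OF two_nonzero] by simp
qed

lemma f1_swap: "f1 b a x y = - f1 a b x y"
  unfolding comp1_def
  by (subst (1 2) w_antisym) (simp add: Z.scale_minus_right[symmetric] add.commute)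

lemma f1_sym: "f1 a b y x = f1 a b x y"
  unfolding comp1_def by (simp add: add.commute)

lemma f2_antisym: "f2 c y x = - f2 c x y"
  unfolding comp2_def by (simp add: Z.scale_minus_right[symmetric])

lemma f1_bilinear: "bilinear_map sL sL sZ (f1 a b)"
  unfolding bilinear_map_def linear_iff comp1_def
  using vector_space_L vector_space_Z
  by (simp add: linear_simps Z.scale_right_distrib algebra_simps)

lemma f2_bilinear: "bilinear_map sL sL sZ (f2 c)"
  unfolding bilinear_map_def linear_iff comp2_def
  using vector_space_L vector_space_Z
  by (simp add: linear_simps Z.scale_right_distrib Z.scale_right_diff_distrib algebra_simps)

lemma cocycle_on_tensors:
  "f1 (a * b) c (br x y) z + f1 (b * c) a (br y z) x + f1 (c * a) b (br z x) y
    + (f2 (a * b * c) (br x y) z + f2 (a * b * c) (br y z) x + f2 (a * b * c) (br z x) y) = 0"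
proof -
  have "w (brG (t a x) (t b y)) (t c z) + w (brG (t b y) (t c z)) (t a x)
      + w (brG (t c z) (t a x)) (t b y) = 0"
    using cocycle unfolding two_cocycle_def by blast
  then show ?thesis
    by (simp add: bracket_tensor w_tensor_decomp ac_simps)
qed

lemma f1_unit_zero: "f1 c 1 x y = 0"
proof -
  define sigma where "sigma = (\<lambda>x y. f1 c 1 x y - f2 c x y)"
  have sigma_bilinear: "bilinear_map sL sL sZ sigma"
    unfolding sigma_def by (rule bilinear_map_diff[OF f1_bilinear f2_bilinear])
  have "sigma x (br y z) - sigma y (br x z) - sigma (br x y) z = 0" for x y z
    \<comment> \<open>the cocycle identity of w on 1\<otimes>x, 1\<otimes>y, c\<otimes>z\<close>
  proof -
    have br_zx: "br z x = - br x z"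
      by (rule lie_algebra_antisym[OF lie])
    have "f1 c 1 (br z x) y = - f1 c 1 y (br x z)"
      using f1_sym[of c 1 "br z x" y]
      by (simp add: br_zx module_hom.neg[OF bilinear_map_module_hom_right[OF f1_bilinear]])
    moreover have "f2 c (br z x) y = f2 c y (br x z)"
      using f2_antisym[of c "br z x" y]
      by (simp add: br_zx module_hom.neg[OF bilinear_map_module_hom_right[OF f2_bilinear]])
    moreover have "- f1 c 1 (br x y) z + f1 c 1 (br y z) x + f1 c 1 (br z x) y
        + (f2 c (br x y) z + f2 c (br y z) x + f2 c (br z x) y) = 0"
      using cocycle_on_tensors[of 1 1 c x y z] f1_swap[of 1 c] by simp
    ultimately show ?thesis
      by (simp add: sigma_def f1_sym[of c 1 "br y z"] f2_antisym[of c "br y z"] algebra_simps)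
  qed
  then have "sigma x y = - sigma y x"
    by (rule H1_coadjoint_zero_vector_cocycle_antisym[OF lie H1 vector_space_Z sigma_bilinear])
  then have "f1 c 1 x y + f1 c 1 x y = 0"
    by (simp add: sigma_def f1_sym[of c 1 y x] f2_antisym[of c y x] algebra_simps)
  then show ?thesis
    using Z.add_self_eq_0_iff[OF two_nonzero] by simp
qed

lemma f2_cyclic_zero: "f2 c (br x y) z + f2 c (br y z) x + f2 c (br z x) y = 0"
  using cocycle_on_tensors[of 1 1 c x y z] f1_swap[of 1 c] by (simp add: f1_unit_zero)

lemma f1_extension_two_cocycle:
  assumes "bilinear_map sG sG sZ w1"
    and w1_tensor: "\<And>a b x y. w1 (t a x) (t b y) = f1 a b x y"
  shows "two_cocycle brG w1"
proof (rule two_cocycle_on_span[OF is_tensor_product_span[OF tensor] _ assms(1)])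
  show "bilinear_map sG sG sG brG"
    using bracket by (simp add: current_bracket_def)
  fix u v s
  assume "u \<in> range (case_prod t)" "v \<in> range (case_prod t)" "s \<in> range (case_prod t)"
  then obtain a x b y c z where "u = t a x" "v = t b y" "s = t c z"
    by auto
  then show "w1 (brG u v) s + w1 (brG v s) u + w1 (brG s u) v = 0"
    using cocycle_on_tensors[of a b c x y z] f2_cyclic_zero[of "a * b * c" x y z]
    by (simp add: bracket_tensor w1_tensor)
qed

end

theorem corollary3p8:
  fixes sA :: "'k::field \<Rightarrow> 'a::comm_ring_1 \<Rightarrow> 'a"
    and sL :: "'k \<Rightarrow> 'l::ab_group_add \<Rightarrow> 'l"
    and br :: "'l \<Rightarrow> 'l \<Rightarrow> 'l"
    and sG :: "'k \<Rightarrow> 'g::ab_group_add \<Rightarrow> 'g"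
    and t :: "'a \<Rightarrow> 'l \<Rightarrow> 'g"
    and brG :: "'g \<Rightarrow> 'g \<Rightarrow> 'g"
    and sZ :: "'k \<Rightarrow> 'z::ab_group_add \<Rightarrow> 'z"
  assumes "(2::'k) \<noteq> 0"
    and "comm_unital_algebra sA"
    and "lie_algebra sL br"
    and "H1_coadjoint_zero sL br"
    and "is_tensor_product sA sL sG t"
    and "current_bracket sA sL sG br t brG"
    and "vector_space sZ"
  shows "\<not> (\<exists>w. coupled_cocycle sG sZ t brG w)"
proof
  assume "\<exists>w. coupled_cocycle sG sZ t brG w"
  then obtain w w1 where "alt_bilinear sG sZ w" "two_cocycle brG w"
    and "\<And>a b x y. comp3 sZ t w a b x y = 0"
    and w1: "bilinear_map sG sG sZ w1" "\<And>a b x y. w1 (t a x) (t b y) = comp1 sZ t w a b x y"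
    and not_cocycle: "\<not> two_cocycle brG w1"
    unfolding coupled_cocycle_def by blast
  then interpret current_algebra_cocycle sA sL br sG t brG sZ w
    using assms unfolding current_algebra_cocycle_def by blast
  from w1 have "two_cocycle brG w1"
    by (rule f1_extension_two_cocycle)
  with not_cocycle show False
    by contradiction
qed

end
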